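(* Let $G$ be a three-dimensional space group and $\mathbf{q}$ a point whose site-symmetry group $G_\mathbf{q}$ is maximal and isomorphic to one of the point groups $O$, $T_d$ or $O_h$ (the only crystallographic point groups with four-dimensional irreducible representations). Then there is no point $\mathbf{q}_0$ whose site-symmetry group $G_{\mathbf{q}_0}$ is a subgroup of index two in $G_\mathbf{q}$.
   Context: A space group $G$ is a group of affine isometries of $\mathbb{R}^3$ containing a Bravais lattice of translations. The site-symmetry group of a point $\mathbf{q}$ is $G_\mathbf{q}=\{g\in G:g\mathbf{q}=\mathbf{q}\}$; it is maximal if there is no finite group $H\neq G_\mathbf{q}$ with $G_\mathbf{q}\subset H\subset G$. *)

theory Defs
  imports "HOL-Analysis.Analysis" "HOL-Algebra.Coset"
begin

type_synonym pt = "real^3"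
type_synonym aff = "pt \<Rightarrow> pt"

definition affine_isometry :: "aff \<Rightarrow> bool" where
  "affine_isometry g \<longleftrightarrow>
     (\<exists>A::real^3^3. \<exists>t::pt. orthogonal_matrix A \<and> (\<forall>x. g x = A *v x + t))"

definition transl :: "pt \<Rightarrow> aff" where
  "transl v = (\<lambda>x. x + v)"

definition bravais_lattice :: "pt set \<Rightarrow> bool" where
  "bravais_lattice L \<longleftrightarrow>
     (\<exists>B::real^3^3. invertible B \<and>
        L = range (\<lambda>n::3 \<Rightarrow> int. B *v (\<chi> i. of_int (n i))))"

definition fg :: "aff set \<Rightarrow> aff monoid" where
  "fg H = \<lparr>carrier = H, monoid.mult = (\<circ>), one = id\<rparr>"

definition space_group :: "aff set \<Rightarrow> bool" where
  "space_group G \<longleftrightarrow>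
     (\<forall>g\<in>G. affine_isometry g) \<and>
     id \<in> G \<and>
     (\<forall>g\<in>G. \<forall>h\<in>G. g \<circ> h \<in> G) \<and>
     (\<forall>g\<in>G. \<exists>h\<in>G. g \<circ> h = id \<and> h \<circ> g = id) \<and>
     bravais_lattice {v. transl v \<in> G}"

definition site :: "aff set \<Rightarrow> pt \<Rightarrow> aff set" where
  "site G q = {g \<in> G. g q = q}"

definition maximal_site :: "aff set \<Rightarrow> pt \<Rightarrow> bool" where
  "maximal_site G q \<longleftrightarrow>
     (\<forall>H. subgroup H (fg G) \<and> finite H \<and> site G q \<subseteq> H \<longrightarrow> H = site G q)"

definition mgrp :: "(real^3^3) set \<Rightarrow> (real^3^3) monoid" where
  "mgrp P = \<lparr>carrier = P, monoid.mult = (**), one = mat 1\<rparr>"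

definition cube :: "pt set" where
  "cube = {x. \<forall>i. \<bar>x $ i\<bar> \<le> 1}"

definition tetra_vertices :: "pt set" where
  "tetra_vertices = {vector [1,1,1], vector [1,-1,-1], vector [-1,1,-1], vector [-1,-1,1]}"

definition pg_Oh :: "(real^3^3) set" where
  "pg_Oh = {A. orthogonal_matrix A \<and> (\<lambda>x. A *v x) ` cube = cube}"

definition pg_O :: "(real^3^3) set" where
  "pg_O = {A \<in> pg_Oh. det A = 1}"

definition pg_Td :: "(real^3^3) set" where
  "pg_Td = {A. orthogonal_matrix A \<and> (\<lambda>x. A *v x) ` tetra_vertices = tetra_vertices}"

end

theory Submission
  imports Defs
begin

text \<open>Let \<open>H = G\<^sub>q\<^sub>0\<close> have index two in \<open>K = G\<^sub>q\<close>. Then \<open>q\<^sub>0 \<noteq> q\<close>, and every square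
  \<open>a\<^sup>2\<close> of an element of \<open>K\<close> lies in \<open>H\<close>, so it fixes both \<open>q\<close> and \<open>q\<^sub>0\<close>: its linear
  part fixes the vector \<open>q\<^sub>0 - q\<close>. Hence all fourth powers \<open>a\<^sup>4 = (a\<^sup>2)\<^sup>2\<close> are rotations
  about one common axis and commute with each other. But \<open>O\<close>, \<open>T\<^sub>d\<close> and \<open>O\<^sub>h\<close> all contain
  the rotations of order three about two different body diagonals of the cube, which are
  their own fourth powers and do not commute.\<close>

lemma cross_cross_left: "cross3 (cross3 a b) c = (a \<bullet> c) *\<^sub>R b - (b \<bullet> c) *\<^sub>R a"
  by (simp add: cross3_simps forall_3)

lemma orthonormal_frame_expansion:
  fixes u w x :: "real^3"
  assumes u: "norm u = 1" and w: "norm w = 1" and uw: "u \<bullet> w = 0"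
  shows "x = (u \<bullet> x) *\<^sub>R u + (w \<bullet> x) *\<^sub>R w + (cross3 u w \<bullet> x) *\<^sub>R cross3 u w"
proof -
  define k where "k = cross3 u w"
  define z where "z = x - ((u \<bullet> x) *\<^sub>R u + (w \<bullet> x) *\<^sub>R w + (k \<bullet> x) *\<^sub>R k)"
  have uu: "u \<bullet> u = 1" and ww: "w \<bullet> w = 1" using u w by (simp_all add: dot_square_norm)
  have ku: "k \<bullet> u = 0" "k \<bullet> w = 0" unfolding k_def by (simp_all add: dot_cross_self)
  have nk: "norm k = 1"
    using norm_cross_dot[of u w] u w uw norm_ge_zero[of k] unfolding k_def
    by (simp add: power2_eq_1_iff)
  then have kk: "k \<bullet> k = 1" by (simp add: dot_square_norm)
  have "u \<bullet> z = 0" "w \<bullet> z = 0" "k \<bullet> z = 0"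
    unfolding z_def using uu ww kk uw ku
    by (simp_all add: inner_diff_right inner_add_right inner_commute)
  then have "cross3 k z = 0" "k \<bullet> z = 0" unfolding k_def cross_cross_left by simp_all
  then have "z = 0" using norm_cross_dot[of k z] nk by simp
  then show ?thesis unfolding z_def k_def by simp
qed

lemma orthogonal_matrix_inner:
  fixes M :: "real^'n^'n"
  assumes "orthogonal_matrix M"
  shows "(M *v x) \<bullet> (M *v y) = x \<bullet> y"
  using orthogonal_transformation_matrix[of "(*v) M"] assms
  by (simp add: orthogonal_transformation_def matrix_vector_mul_linear)

lemma rotation_matrix_about_unit_axis:
  fixes R :: "real^3^3" and u w :: "real^3"
  assumes R: "rotation_matrix R" and Ru: "R *v u = u"
    and u: "norm u = 1" and w: "norm w = 1" and uw: "u \<bullet> w = 0"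
  shows "R *v w = (w \<bullet> (R *v w)) *\<^sub>R w + (cross3 u w \<bullet> (R *v w)) *\<^sub>R cross3 u w"
    and "R *v cross3 u w = (w \<bullet> (R *v w)) *\<^sub>R cross3 u w - (cross3 u w \<bullet> (R *v w)) *\<^sub>R w"
proof -
  have oR: "orthogonal_matrix R" using R by (simp add: rotation_matrix_def)
  have "u \<bullet> (R *v w) = 0"
    using orthogonal_matrix_inner[OF oR, of u w] Ru uw by simp
  then show Rw: "R *v w = (w \<bullet> (R *v w)) *\<^sub>R w + (cross3 u w \<bullet> (R *v w)) *\<^sub>R cross3 u w"
    using orthonormal_frame_expansion[OF u w uw, of "R *v w"] by simp
  have uuw: "cross3 u (cross3 u w) = - w"
    using cross_cross_left[of u w u] cross_skew[of u "cross3 u w"] u uw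
    by (simp add: inner_commute dot_square_norm)
  have "R *v cross3 u w = cross3 u (R *v w)"
    using cross_rotation_matrix[OF R, of u w] Ru by simp
  also have "\<dots> = (w \<bullet> (R *v w)) *\<^sub>R cross3 u w - (cross3 u w \<bullet> (R *v w)) *\<^sub>R w"
    by (subst Rw) (simp add: cross_add_right cross_mult_right uuw)
  finally show "R *v cross3 u w = (w \<bullet> (R *v w)) *\<^sub>R cross3 u w - (cross3 u w \<bullet> (R *v w)) *\<^sub>R w" .
qed

lemma rotation_matrices_common_axis_commute:
  fixes M N :: "real^3^3" and v :: "real^3"
  assumes M: "rotation_matrix M" "M *v v = v" and N: "rotation_matrix N" "N *v v = v"
    and "v \<noteq> 0"
  shows "M ** N = N ** M"
proof -
  define u where "u = (1 / norm v) *\<^sub>R v"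
  have u: "norm u = 1" "M *v u = u" "N *v u = u"
    using assms unfolding u_def by (simp_all add: matrix_vector_mult_scaleR)
  obtain w0 where w0: "w0 \<noteq> 0" "orthogonal u w0"
    using orthogonal_to_vector_exists[of u] by auto
  define w where "w = (1 / norm w0) *\<^sub>R w0"
  have w: "norm w = 1" and uw: "u \<bullet> w = 0"
    using w0 unfolding w_def orthogonal_def by simp_all
  define k where "k = cross3 u w"
  obtain a b where Mw: "M *v w = a *\<^sub>R w + b *\<^sub>R k" and Mk: "M *v k = a *\<^sub>R k - b *\<^sub>R w"
    using rotation_matrix_about_unit_axis[OF M(1) u(2,1) w uw] unfolding k_def by blast
  obtain c d where Nw: "N *v w = c *\<^sub>R w + d *\<^sub>R k" and Nk: "N *v k = c *\<^sub>R k - d *\<^sub>R w"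
    using rotation_matrix_about_unit_axis[OF N(1) u(3,1) w uw] unfolding k_def by blast
  show ?thesis
  proof (subst matrix_eq, intro allI)
    fix x :: "real^3"
    have x: "x = (u \<bullet> x) *\<^sub>R u + (w \<bullet> x) *\<^sub>R w + (k \<bullet> x) *\<^sub>R k"
      using orthonormal_frame_expansion[OF u(1) w uw] unfolding k_def .
    have "(M ** N) *v ((u \<bullet> x) *\<^sub>R u + (w \<bullet> x) *\<^sub>R w + (k \<bullet> x) *\<^sub>R k) =
          (N ** M) *v ((u \<bullet> x) *\<^sub>R u + (w \<bullet> x) *\<^sub>R w + (k \<bullet> x) *\<^sub>R k)"
      by (simp add: matrix_vector_mul_assoc[symmetric] matrix_vector_right_distrib
          matrix_vector_mult_scaleR u Mw Mk Nw Nk algebra_simps)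
    then show "(M ** N) *v x = (N ** M) *v x" using x by simp
  qed
qed

lemma rotation_matrix_square: "orthogonal_matrix (X :: real^'n^'n) \<Longrightarrow> rotation_matrix (X ** X)"
  using det_orthogonal_matrix[of X]
  by (auto simp: rotation_matrix_def orthogonal_matrix_mul det_mul)

lemma affine_isometry_fixing_point:
  assumes "affine_isometry h" "h q = q"
  obtains A where "orthogonal_matrix A" "\<And>x. h x = A *v (x - q) + q"
proof -
  obtain A t where A: "orthogonal_matrix A" "\<And>x. h x = A *v x + t"
    using assms(1) unfolding affine_isometry_def by blast
  have "t = q - A *v q" using A(2)[of q] assms(2) by (simp add: algebra_simps)
  then show thesis using that A by (simp add: matrix_vector_mult_diff_distrib)
qed

lemma affine_isometry_squares_commute:
  assumes g: "affine_isometry g" "g q = q" "g p = p"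
    and h: "affine_isometry h" "h q = q" "h p = p" and "p \<noteq> q"
  shows "(g \<circ> g) \<circ> (h \<circ> h) = (h \<circ> h) \<circ> (g \<circ> g)"
proof -
  obtain X where X: "orthogonal_matrix X" "\<And>x. g x = X *v (x - q) + q"
    using affine_isometry_fixing_point[OF g(1,2)] by blast
  obtain Y where Y: "orthogonal_matrix Y" "\<And>x. h x = Y *v (x - q) + q"
    using affine_isometry_fixing_point[OF h(1,2)] by blast
  have "X *v (p - q) = p - q" "Y *v (p - q) = p - q"
    using X(2)[of p] Y(2)[of p] g(3) h(3) by (simp_all add: algebra_simps)
  then have "X ** X *v (p - q) = p - q" "Y ** Y *v (p - q) = p - q"
    by (simp_all add: matrix_vector_mul_assoc[symmetric])
  then have XY: "(X ** X) ** (Y ** Y) = (Y ** Y) ** (X ** X)"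
    using \<open>p \<noteq> q\<close>
    by (intro rotation_matrices_common_axis_commute rotation_matrix_square X(1) Y(1)) auto
  show ?thesis
  proof
    fix x
    have "((g \<circ> g) \<circ> (h \<circ> h)) x = ((X ** X) ** (Y ** Y)) *v (x - q) + q"
      using X(2) Y(2) by (simp add: matrix_vector_mul_assoc[symmetric])
    also have "\<dots> = ((h \<circ> h) \<circ> (g \<circ> g)) x"
      using X(2) Y(2) by (simp add: XY matrix_vector_mul_assoc[symmetric])
    finally show "((g \<circ> g) \<circ> (h \<circ> h)) x = ((h \<circ> h) \<circ> (g \<circ> g)) x" .
  qed
qed

lemma site_group:
  assumes "space_group G"
  shows "group (fg (site G q))"
proof (rule groupI)
  fix x assume "x \<in> carrier (fg (site G q))"
  then have x: "x \<in> G" "x q = q" by (auto simp: fg_def site_def)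
  then obtain y where y: "y \<in> G" "y \<circ> x = id" "x \<circ> y = id"
    using assms unfolding space_group_def by blast
  then have "y q = q" using x(2) by (metis comp_apply id_apply)
  with y show "\<exists>y\<in>carrier (fg (site G q)). y \<otimes>\<^bsub>fg (site G q)\<^esub> x = \<one>\<^bsub>fg (site G q)\<^esub>"
    by (auto simp: fg_def site_def)
qed (use assms in \<open>auto simp: fg_def site_def space_group_def o_assoc\<close>)

lemma (in group) card_rcosets_carrier: "card (rcosets (carrier G)) = 1"
proof -
  have "rcosets (carrier G) = {carrier G}"
    using subgroup.rcos_const[OF subgroup_self is_group] unfolding RCOSETS_def by blast
  then show ?thesis by simp
qed

lemma (in group) index_two_subgroup_contains_squares:
  assumes H: "subgroup H G" and idx: "card (rcosets H) = 2" and k: "k \<in> carrier G"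
  shows "k \<otimes> k \<in> H"
proof (rule ccontr)
  assume kk: "k \<otimes> k \<notin> H"
  have "k \<notin> H" using kk subgroup.m_closed[OF H] by blast
  have HG: "H \<subseteq> carrier G" using subgroup.subset[OF H] .
  have distinct: "H #> x \<noteq> H #> y"
    if "x \<in> carrier G" "y \<in> carrier G" "y \<otimes> inv x \<notin> H" for x y
    using that subgroup.rcos_module[OF H is_group] rcos_self[OF _ H] by metis
  have "(k \<otimes> k) \<otimes> inv k = k" using k by (simp add: m_assoc)
  then have "H #> k \<noteq> H #> (k \<otimes> k)" using k \<open>k \<notin> H\<close> by (intro distinct) auto
  moreover have "H #> \<one> \<noteq> H #> k" "H #> \<one> \<noteq> H #> (k \<otimes> k)"
    using k kk \<open>k \<notin> H\<close> by (intro distinct; simp)+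
  ultimately have "card {H #> \<one>, H #> k, H #> (k \<otimes> k)} = 3" by simp
  moreover have "{H #> \<one>, H #> k, H #> (k \<otimes> k)} \<subseteq> rcosets H"
    using k by (auto intro: rcosetsI[OF HG])
  moreover have "finite (rcosets H)" using idx card.infinite by force
  ultimately have "3 \<le> card (rcosets H)" by (metis card_mono)
  with idx show False by simp
qed

lemma index_two_site_fourth_powers_commute:
  assumes G: "space_group G"
    and H: "subgroup (site G p) (fg (site G q))"
    and idx: "card (rcosets\<^bsub>fg (site G q)\<^esub> (site G p)) = 2"
    and a: "a \<in> site G q" and b: "b \<in> site G q"
  shows "((a \<circ> a) \<circ> (a \<circ> a)) \<circ> ((b \<circ> b) \<circ> (b \<circ> b)) =
         ((b \<circ> b) \<circ> (b \<circ> b)) \<circ> ((a \<circ> a) \<circ> (a \<circ> a))"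
proof -
  interpret K: group "fg (site G q)" using site_group[OF G] .
  have "p \<noteq> q"
  proof
    assume "p = q"
    then show False using idx K.card_rcosets_carrier by (simp add: fg_def)
  qed
  have square: "x \<circ> x \<in> site G p" if "x \<in> site G q" for x
    using K.index_two_subgroup_contains_squares[OF H idx, of x] that by (simp add: fg_def)
  have fixing: "affine_isometry h" "h q = q" "h p = p" if "h \<in> site G p" for h
    using that subgroup.subset[OF H] G by (auto simp: fg_def site_def space_group_def)
  show ?thesis
    using affine_isometry_squares_commute[OF fixing[OF square[OF a]] fixing[OF square[OF b]]
        \<open>p \<noteq> q\<close>] .
qed

lemma iso_fourth_powers_commute:
  assumes iso: "fg K \<cong> mgrp P" and K: "group (fg K)"
    and comm: "\<And>a b. a \<in> K \<Longrightarrow> b \<in> K \<Longrightarrow>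
       ((a \<circ> a) \<circ> (a \<circ> a)) \<circ> ((b \<circ> b) \<circ> (b \<circ> b)) =
       ((b \<circ> b) \<circ> (b \<circ> b)) \<circ> ((a \<circ> a) \<circ> (a \<circ> a))"
    and A: "A \<in> P" and B: "B \<in> P"
  shows "((A ** A) ** (A ** A)) ** ((B ** B) ** (B ** B)) =
         ((B ** B) ** (B ** B)) ** ((A ** A) ** (A ** A))"
proof -
  obtain f where f: "f \<in> iso (fg K) (mgrp P)" using iso unfolding is_iso_def by blast
  then have "f ` K = P" by (auto simp: iso_def bij_betw_def fg_def mgrp_def)
  then obtain a b where ab: "a \<in> K" "b \<in> K" "f a = A" "f b = B" using A B by blast
  have closed: "x \<circ> y \<in> K" if "x \<in> K" "y \<in> K" for x y
    using monoid.m_closed[OF group.is_monoid[OF K], of x y] that by (simp add: fg_def)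
  have mult: "f (x \<circ> y) = f x ** f y" if "x \<in> K" "y \<in> K" for x y
    using hom_mult[of f "fg K" "mgrp P" x y] f that by (simp add: iso_def fg_def mgrp_def)
  from comm[OF ab(1,2)] have "f (((a \<circ> a) \<circ> (a \<circ> a)) \<circ> ((b \<circ> b) \<circ> (b \<circ> b))) =
      f (((b \<circ> b) \<circ> (b \<circ> b)) \<circ> ((a \<circ> a) \<circ> (a \<circ> a)))" by simp
  then show ?thesis using ab by (simp add: mult closed)
qed

text \<open>The rotations by \<open>2\<pi>/3\<close> about the body diagonals \<open>(1,1,1)\<close> and \<open>(1,-1,1)\<close> of
  the cube. They have order three, so each is its own fourth power.\<close>

definition diag_rot_a :: "real^3^3" where
  "diag_rot_a = vector [vector [0,0,1], vector [1,0,0], vector [0,1,0]]"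

definition diag_rot_b :: "real^3^3" where
  "diag_rot_b = vector [vector [0,0,1], vector [-1,0,0], vector [0,-1,0]]"

lemma diag_rot_a_mult: "diag_rot_a *v x = vector [x$3, x$1, x$2]"
  by (simp add: diag_rot_a_def vec_eq_iff forall_3 matrix_vector_mult_def sum_3 vector_3)

lemma diag_rot_b_mult: "diag_rot_b *v x = vector [x$3, - x$1, - x$2]"
  by (simp add: diag_rot_b_def vec_eq_iff forall_3 matrix_vector_mult_def sum_3 vector_3)

lemma vector_3_eq_iff: "(vector [a, b, c] :: real^3) = vector [d, e, f] \<longleftrightarrow> a = d \<and> b = e \<and> c = f"
  by (simp add: vec_eq_iff forall_3 vector_3)

lemma rotation_matrix_diag_rot: "rotation_matrix diag_rot_a" "rotation_matrix diag_rot_b"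
  by (simp_all add: rotation_matrix_def orthogonal_matrix_def diag_rot_a_def diag_rot_b_def
      vec_eq_iff forall_3 matrix_matrix_mult_def transpose_def mat_def sum_3 vector_3 det_3)

lemma cube_diag_rot: "(\<lambda>x. diag_rot_a *v x) ` cube = cube" "(\<lambda>x. diag_rot_b *v x) ` cube = cube"
proof -
  have pre: "y = diag_rot_a *v vector [y$2, y$3, y$1]" "y = diag_rot_b *v vector [- y$2, - y$3, y$1]"
    for y :: "real^3"
    by (simp_all add: diag_rot_a_mult diag_rot_b_mult vec_eq_iff forall_3 vector_3)
  show "(\<lambda>x. diag_rot_a *v x) ` cube = cube"
  proof (intro subset_antisym subsetI)
    fix y assume "y \<in> cube"
    then have "vector [y$2, y$3, y$1] \<in> cube" by (auto simp: cube_def forall_3 vector_3)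
    with pre(1) show "y \<in> (\<lambda>x. diag_rot_a *v x) ` cube" by (rule image_eqI)
  qed (auto simp: cube_def diag_rot_a_mult forall_3 vector_3)
  show "(\<lambda>x. diag_rot_b *v x) ` cube = cube"
  proof (intro subset_antisym subsetI)
    fix y assume "y \<in> cube"
    then have "vector [- y$2, - y$3, y$1] \<in> cube" by (auto simp: cube_def forall_3 vector_3)
    with pre(2) show "y \<in> (\<lambda>x. diag_rot_b *v x) ` cube" by (rule image_eqI)
  qed (auto simp: cube_def diag_rot_b_mult forall_3 vector_3)
qed

lemma tetra_vertices_diag_rot:
  "(\<lambda>x. diag_rot_a *v x) ` tetra_vertices = tetra_vertices"
  "(\<lambda>x. diag_rot_b *v x) ` tetra_vertices = tetra_vertices"
  by (auto simp: tetra_vertices_def diag_rot_a_mult diag_rot_b_mult vector_3 vector_3_eq_iff)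

lemma diag_rot_in_point_groups:
  assumes "P \<in> {pg_O, pg_Td, pg_Oh}"
  shows "diag_rot_a \<in> P" "diag_rot_b \<in> P"
  using assms rotation_matrix_diag_rot cube_diag_rot tetra_vertices_diag_rot
  by (auto simp: pg_O_def pg_Oh_def pg_Td_def rotation_matrix_def)

lemma diag_rot_fourth_powers_noncommuting:
  "((diag_rot_a ** diag_rot_a) ** (diag_rot_a ** diag_rot_a)) **
     ((diag_rot_b ** diag_rot_b) ** (diag_rot_b ** diag_rot_b)) \<noteq>
   ((diag_rot_b ** diag_rot_b) ** (diag_rot_b ** diag_rot_b)) **
     ((diag_rot_a ** diag_rot_a) ** (diag_rot_a ** diag_rot_a))"
  by (subst matrix_eq, rule notI, drule spec[of _ "vector [0, 1, 0]"])
    (simp add: matrix_vector_mul_assoc[symmetric] diag_rot_a_mult diag_rot_b_mult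
      vector_3 vector_3_eq_iff)

theorem mainTheorem6:
  fixes G :: "(real^3 \<Rightarrow> real^3) set" and q :: "real^3"
  assumes "space_group G"
    and "maximal_site G q"
    and "fg (site G q) \<cong> mgrp pg_O \<or> fg (site G q) \<cong> mgrp pg_Td \<or> fg (site G q) \<cong> mgrp pg_Oh"
  shows "\<not> (\<exists>q0::real^3. subgroup (site G q0) (fg (site G q)) \<and>
                        card (rcosets\<^bsub>fg (site G q)\<^esub> (site G q0)) = 2)"
proof
  assume "\<exists>q0. subgroup (site G q0) (fg (site G q)) \<and>
              card (rcosets\<^bsub>fg (site G q)\<^esub> (site G q0)) = 2"
  then obtain q0 where H: "subgroup (site G q0) (fg (site G q))"
    and idx: "card (rcosets\<^bsub>fg (site G q)\<^esub> (site G q0)) = 2" by blast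
  obtain P where P: "P \<in> {pg_O, pg_Td, pg_Oh}" "fg (site G q) \<cong> mgrp P"
    using assms(3) by blast
  show False
    using iso_fourth_powers_commute[OF P(2) site_group[OF assms(1)]
        index_two_site_fourth_powers_commute[OF assms(1) H idx] diag_rot_in_point_groups[OF P(1)]]
      diag_rot_fourth_powers_noncommuting by blast
qed

end
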